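(* Fix an aggregator $f:[0,1]^2\to[0,1]$ and a two-signal structure $\theta=(\mu,\alpha_1,\beta_1,\alpha_2,\beta_2)\in\Theta_4$. Define for $\lambda\in(0,1]$ $$u(\lambda)=\Big(1+\big(\tfrac{1-\mu}{\mu}\big)^{1/\lambda}\Big)^{-1},\qquad t_\theta(\lambda)=(u(\lambda),\alpha_1,\beta_1,\alpha_2,\beta_2)\in\Theta_4,$$ and $$\phi_\theta(\lambda)=\mathbb E_{t_\theta(\lambda)}\big[L(f(\mathbf x(\mathbf s,\lambda)),\omega)-L(f^*(\mathbf s),\omega)\big],$$ where the expert reports $\mathbf x(\mathbf s,\lambda)$ and the benchmark $f^*$ are computed with respect to the structure $t_\theta(\lambda)$. Then $\phi_\theta$ is single-troughed on $(0,1]$: it is either monotone, or first monotonically non-increasing and then monotonically non-decreasing.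
   Context: Setting: binary state $\omega\in\{0,1\}$, two experts. $\Theta_4$ is the set of conditionally independent two-signal structures, written as quintuples $(\mu,\alpha_1,\beta_1,\alpha_2,\beta_2)$: signal spaces $\mathcal S_1=\mathcal S_2=\{r,b\}$, $\mu=\Pr[\omega=1]\in(0,1)$, $\alpha_i=\Pr[S_i=r\mid\omega=1]$, $\beta_i=\Pr[S_i=r\mid\omega=0]$, with $S_1,S_2$ conditionally independent given $\omega$. For a structure with prior $\mu'$ and degree $\lambda\in(0,1]$, expert $i$ with signal $s_i$ reports $x_i(s_i,\lambda)=\frac{\mu'^\lambda\Pr[S_i=s_i\mid\omega=1]}{\mu'^\lambda\Pr[S_i=s_i\mid\omega=1]+(1-\mu')^\lambda\Pr[S_i=s_i\mid\omega=0]}$, and $\mathbf x(\mathbf s,\lambda)=(x_1(s_1,\lambda),x_2(s_2,\lambda))$. $f^*(\mathbf s)=\Pr[\omega=1\mid S_1=s_1,S_2=s_2]$ under the structure in question. The loss is $L(y,\omega)=(y-\omega)^2$. *)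

theory Defs
  imports Complex_Main
begin

text \<open>Signals: True = r, False = b. State omega: True = 1, False = 0.\<close>

definition in_Theta4 :: "real \<Rightarrow> real \<Rightarrow> real \<Rightarrow> real \<Rightarrow> real \<Rightarrow> bool" where
  "in_Theta4 \<mu> a1 b1 a2 b2 \<longleftrightarrow> 0 < \<mu> \<and> \<mu> < 1 \<and>
     a1 \<in> {0..1} \<and> b1 \<in> {0..1} \<and> a2 \<in> {0..1} \<and> b2 \<in> {0..1}"

definition sig_prob :: "real \<Rightarrow> bool \<Rightarrow> real" where
  "sig_prob p s = (if s then p else 1 - p)"

definition state_prob :: "real \<Rightarrow> bool \<Rightarrow> real" where
  "state_prob \<mu> w = (if w then \<mu> else 1 - \<mu>)"

text \<open>Report of an expert with Pr[S=r|1]=a, Pr[S=r|0]=b, prior mu', degree lam, signal s.\<close>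
definition report :: "real \<Rightarrow> real \<Rightarrow> real \<Rightarrow> real \<Rightarrow> bool \<Rightarrow> real" where
  "report m' a b lam s =
     (m' powr lam * sig_prob a s) /
     (m' powr lam * sig_prob a s + (1 - m') powr lam * sig_prob b s)"

definition fstar :: "real \<Rightarrow> real \<Rightarrow> real \<Rightarrow> real \<Rightarrow> real \<Rightarrow> bool \<Rightarrow> bool \<Rightarrow> real" where
  "fstar \<mu> a1 b1 a2 b2 s1 s2 =
     (\<mu> * sig_prob a1 s1 * sig_prob a2 s2) /
     (\<mu> * sig_prob a1 s1 * sig_prob a2 s2 + (1 - \<mu>) * sig_prob b1 s1 * sig_prob b2 s2)"

definition joint_prob :: "real \<Rightarrow> real \<Rightarrow> real \<Rightarrow> real \<Rightarrow> real \<Rightarrow> bool \<Rightarrow> bool \<Rightarrow> bool \<Rightarrow> real" where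
  "joint_prob \<mu> a1 b1 a2 b2 w s1 s2 =
     state_prob \<mu> w * sig_prob (if w then a1 else b1) s1 * sig_prob (if w then a2 else b2) s2"

definition sq_loss :: "real \<Rightarrow> bool \<Rightarrow> real" where
  "sq_loss y w = (y - of_bool w)\<^sup>2"

definition u_prior :: "real \<Rightarrow> real \<Rightarrow> real" where
  "u_prior \<mu> lam = 1 / (1 + ((1 - \<mu>) / \<mu>) powr (1 / lam))"

definition phi :: "(real \<Rightarrow> real \<Rightarrow> real) \<Rightarrow> real \<Rightarrow> real \<Rightarrow> real \<Rightarrow> real \<Rightarrow> real \<Rightarrow> real \<Rightarrow> real" where
  "phi f \<mu> a1 b1 a2 b2 lam =
     (let u = u_prior \<mu> lam in
      \<Sum>w\<in>(UNIV::bool set). \<Sum>s1\<in>(UNIV::bool set). \<Sum>s2\<in>(UNIV::bool set).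
        joint_prob u a1 b1 a2 b2 w s1 s2 *
        (sq_loss (f (report u a1 b1 lam s1) (report u a2 b2 lam s2)) w
         - sq_loss (fstar u a1 b1 a2 b2 s1 s2) w))"

definition single_troughed_on :: "real set \<Rightarrow> (real \<Rightarrow> real) \<Rightarrow> bool" where
  "single_troughed_on S g \<longleftrightarrow>
     (\<forall>x\<in>S. \<forall>y\<in>S. x \<le> y \<longrightarrow> g x \<le> g y) \<or>
     (\<forall>x\<in>S. \<forall>y\<in>S. x \<le> y \<longrightarrow> g y \<le> g x) \<or>
     (\<exists>c\<in>S. (\<forall>x\<in>S. \<forall>y\<in>S. x \<le> y \<longrightarrow> y \<le> c \<longrightarrow> g y \<le> g x) \<and>
            (\<forall>x\<in>S. \<forall>y\<in>S. c \<le> x \<longrightarrow> x \<le> y \<longrightarrow> g x \<le> g y))"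

end

theory Submission
  imports Defs "HOL-Analysis.Analysis"
begin

text \<open>Under \<open>t\<^sub>\<theta>(\<lambda>)\<close> the tempered prior odds \<open>(u(\<lambda>) / (1 - u(\<lambda>)))\<^sup>\<lambda>\<close> equal \<open>\<mu> / (1 - \<mu>)\<close>,
  so every report coincides with the Bayesian report under \<open>\<theta>\<close> and the aggregated prediction
  table does not depend on \<open>\<lambda>\<close>. Hence \<open>\<phi>\<^sub>\<theta>(\<lambda>) = R(u(\<lambda>))\<close>, where \<open>R(u)\<close> is the expected regret,
  at prior \<open>u\<close>, of that fixed table. On each signal profile the regret of predicting \<open>c\<close> is
  \<open>(c (x + y) - x)\<^sup>2 / (x + y)\<close> with \<open>x\<close>, \<open>y\<close> affine in \<open>u\<close>, a quadratic-over-linear and thus convex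
  function of \<open>u\<close>. Since \<open>u\<close> is continuous and monotone in \<open>\<lambda>\<close>, \<open>\<phi>\<^sub>\<theta>\<close> is continuous and
  quasiconvex, and a continuous quasiconvex function on an interval is single-troughed.\<close>

lemma single_troughed_on_cong:
  assumes "\<And>x. x \<in> S \<Longrightarrow> g x = h x"
  shows "single_troughed_on S g = single_troughed_on S h"
  using assms unfolding single_troughed_on_def by (intro arg_cong2[where f = "(\<or>)"] ex_cong1) auto

lemma single_troughed_on_if_quasiconvex:
  fixes g :: "real \<Rightarrow> real"
  assumes quasiconvex: "\<And>x y z. x \<in> {a<..b} \<Longrightarrow> z \<in> {a<..b} \<Longrightarrow> x \<le> y \<Longrightarrow> y \<le> z \<Longrightarrow>
      g y \<le> max (g x) (g z)"
    and cont: "continuous_on {a<..b} g"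
  shows "single_troughed_on {a<..b} g"
proof (cases "\<exists>c\<in>{a<..b}. \<forall>x\<in>{a<..b}. g c \<le> g x")
  case True
  then obtain c where c: "c \<in> {a<..b}" "\<forall>x\<in>{a<..b}. g c \<le> g x" by blast
  have "\<forall>x\<in>{a<..b}. \<forall>y\<in>{a<..b}. x \<le> y \<longrightarrow> y \<le> c \<longrightarrow> g y \<le> g x"
    using quasiconvex[of _ c] c by force
  moreover have "\<forall>x\<in>{a<..b}. \<forall>y\<in>{a<..b}. c \<le> x \<longrightarrow> x \<le> y \<longrightarrow> g x \<le> g y"
    using quasiconvex[of c] c by force
  ultimately show ?thesis unfolding single_troughed_on_def using c by blast
next
  case no_minimum: False
  have "g x \<le> g y" if xy: "x \<in> {a<..b}" "y \<in> {a<..b}" "x \<le> y" for x y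
  proof -
    have sub: "{x..b} \<subseteq> {a<..b}" using xy by auto
    obtain p where p: "p \<in> {x..b}" "\<forall>v\<in>{x..b}. g p \<le> g v"
      using continuous_attains_inf[of "{x..b}" g] continuous_on_subset[OF cont sub] xy by auto
    \<comment> \<open>the minimum of \<open>g\<close> on \<open>[x, b]\<close> is beaten by some point, which must lie left of \<open>x\<close>\<close>
    obtain z where z: "z \<in> {a<..b}" "g z < g p"
      using no_minimum p sub by (meson not_le subsetD)
    have "z < x" using p z by (meson atLeastAtMost_iff greaterThanAtMost_iff not_le not_less)
    then have "g x \<le> max (g z) (g y)" using quasiconvex[of z y x] z xy by auto
    moreover have "g p \<le> g x" using p xy by auto
    ultimately show "g x \<le> g y" using z by auto
  qed
  then show ?thesis unfolding single_troughed_on_def by blast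
qed

lemma single_troughed_on_convex_comp_monotone:
  fixes H u :: "real \<Rightarrow> real"
  assumes H: "convex_on I H" "open I"
    and u: "continuous_on {a<..b} u" "u ` {a<..b} \<subseteq> I"
    and monotone: "mono_on {a<..b} u \<or> antimono_on {a<..b} u"
  shows "single_troughed_on {a<..b} (H \<circ> u)"
proof (rule single_troughed_on_if_quasiconvex)
  fix x y z assume xyz: "x \<in> {a<..b}" "z \<in> {a<..b}" "x \<le> y" "y \<le> z"
  then have y: "y \<in> {a<..b}" by auto
  have between: "u y \<in> closed_segment (u x) (u z)"
    using monotone
  proof
    assume "mono_on {a<..b} u"
    then have "u x \<le> u y" "u y \<le> u z" using xyz y by (auto intro: monotone_onD)
    then show ?thesis by (simp add: closed_segment_eq_real_ivl)
  next
    assume "antimono_on {a<..b} u"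
    then have "u y \<le> u x" "u z \<le> u y" using xyz y by (auto intro: monotone_onD)
    then show ?thesis by (auto simp: closed_segment_eq_real_ivl)
  qed
  have "u x \<in> I" "u z \<in> I" using u xyz by auto
  then have "convex_on (closed_segment (u x) (u z)) H"
    by (intro convex_on_subset[OF H(1)] closed_segment_subset convex_on_imp_convex[OF H(1)]) auto
  then show "(H \<circ> u) y \<le> max ((H \<circ> u) x) ((H \<circ> u) z)"
    using between convex_on_le_max[of "u x" "u z" H "u y"] convex_on_le_max[of "u z" "u x" H "u y"]
    by (cases "u x \<le> u z") (auto simp: closed_segment_eq_real_ivl max.commute)
next
  show "continuous_on {a<..b} (H \<circ> u)"
    using continuous_on_compose2[OF convex_on_continuous[OF H(2,1)] u] by (simp add: comp_def)
qed

lemma u_prior_in_open_unit_interval: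
  assumes "0 < \<mu>" "\<mu> < 1"
  shows "u_prior \<mu> lam \<in> {0<..<1}"
proof -
  define k where "k = ((1 - \<mu>) / \<mu>) powr (1 / lam)"
  have "0 < k" using assms by (simp add: k_def)
  then have "0 < 1 / (1 + k)" "1 / (1 + k) < 1" by simp_all
  then show ?thesis by (simp add: u_prior_def k_def)
qed

lemma continuous_on_u_prior:
  assumes "0 < \<mu>" "\<mu> < 1"
  shows "continuous_on {0<..} (u_prior \<mu>)"
proof -
  have "1 + ((1 - \<mu>) / \<mu>) powr t \<noteq> 0" for t by (smt (verit) powr_ge_zero)
  then have "continuous_on {0<..} (\<lambda>lam. 1 / (1 + ((1 - \<mu>) / \<mu>) powr (1 / lam)))"
    using assms by (intro continuous_intros) auto
  then show ?thesis by (simp add: u_prior_def[abs_def])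
qed

lemma mono_on_u_prior:
  assumes "0 < \<mu>" "\<mu> \<le> 1 / 2"
  shows "mono_on {0<..} (u_prior \<mu>)"
proof (rule mono_onI)
  fix x y :: real assume "x \<in> {0<..}" "y \<in> {0<..}" "x \<le> y"
  then have "1 / y \<le> 1 / x" by (simp add: frac_le)
  moreover have "1 \<le> (1 - \<mu>) / \<mu>" using assms by (simp add: field_simps)
  ultimately have "((1 - \<mu>) / \<mu>) powr (1 / y) \<le> ((1 - \<mu>) / \<mu>) powr (1 / x)"
    by (intro powr_mono)
  then show "u_prior \<mu> x \<le> u_prior \<mu> y" by (simp add: u_prior_def frac_le add_pos_nonneg)
qed

lemma antimono_on_u_prior:
  assumes "1 / 2 \<le> \<mu>" "\<mu> < 1"
  shows "antimono_on {0<..} (u_prior \<mu>)"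
proof (rule monotone_onI)
  fix x y :: real assume "x \<in> {0<..}" "y \<in> {0<..}" "x \<le> y"
  then have "1 / y \<le> 1 / x" by (simp add: frac_le)
  moreover have "(1 - \<mu>) / \<mu> \<le> 1" "0 \<le> (1 - \<mu>) / \<mu>" using assms by (simp_all add: field_simps)
  ultimately have "((1 - \<mu>) / \<mu>) powr (1 / x) \<le> ((1 - \<mu>) / \<mu>) powr (1 / y)"
    by (intro powr_mono')
  then show "u_prior \<mu> y \<le> u_prior \<mu> x" by (simp add: u_prior_def frac_le add_pos_nonneg)
qed

lemma mono_or_antimono_on_u_prior:
  assumes \<mu>: "0 < \<mu>" "\<mu> < 1" and S: "S \<subseteq> {0<..}"
  shows "mono_on S (u_prior \<mu>) \<or> antimono_on S (u_prior \<mu>)"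
proof (cases "\<mu> \<le> 1 / 2")
  case True
  show ?thesis using monotone_on_subset[OF mono_on_u_prior[OF \<mu>(1) True] S] ..
next
  case False
  then have "1 / 2 \<le> \<mu>" by simp
  show ?thesis using monotone_on_subset[OF antimono_on_u_prior[OF \<open>1 / 2 \<le> \<mu>\<close> \<mu>(2)] S] ..
qed

lemma report_u_prior:
  assumes "0 < \<mu>" "\<mu> < 1" "0 < lam"
  shows "report (u_prior \<mu> lam) a b lam s = report \<mu> a b 1 s"
proof -
  define r where "r = (1 - \<mu>) / \<mu>"
  define k where "k = r powr (1 / lam)"
  define D where "D = (1 + k) powr lam"
  have r: "r > 0" using assms by (simp add: r_def)
  have k: "k > 0" using r by (simp add: k_def)
  have D: "D > 0" using k by (simp add: D_def)
  have u: "u_prior \<mu> lam = 1 / (1 + k)" by (simp add: u_prior_def r_def k_def)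
  have u': "1 - u_prior \<mu> lam = k / (1 + k)" using k by (simp add: u field_simps)
  have "u_prior \<mu> lam powr lam = 1 / D"
    using k by (simp add: u D_def powr_divide)
  moreover have "(1 - u_prior \<mu> lam) powr lam = r / D"
    using r k assms(3) by (simp add: u' D_def powr_divide k_def powr_powr)
  ultimately have "report (u_prior \<mu> lam) a b lam s = (sig_prob a s / D) / (sig_prob a s / D + r / D * sig_prob b s)"
    by (simp add: report_def)
  also have "\<dots> = sig_prob a s / (sig_prob a s + r * sig_prob b s)"
    using D by (simp add: add_divide_distrib[symmetric])
  also have "\<dots> = report \<mu> a b 1 s"
    using assms by (simp add: report_def r_def field_simps)
  finally show ?thesis .
qed

definition cell_regret :: "real \<Rightarrow> real \<Rightarrow> real \<Rightarrow> real" where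
  "cell_regret c x y = (c * (x + y) - x)\<^sup>2 / (x + y)"

lemma cell_regret_eq_expected_loss_difference:
  fixes c x y :: real
  assumes "0 \<le> x" "0 \<le> y"
  shows "x * (sq_loss c True - sq_loss (x / (x + y)) True)
       + y * (sq_loss c False - sq_loss (x / (x + y)) False) = cell_regret c x y"
proof (cases "x + y = 0")
  case True
  then have "x = 0" "y = 0" using assms by auto
  then show ?thesis by (simp add: cell_regret_def)
next
  case False
  define S where "S = x + y"
  define g where "g = x / S"
  have S: "S \<noteq> 0" using False by (simp add: S_def)
  have x: "x = g * S" and y: "y = (1 - g) * S"
    using S by (simp_all add: g_def S_def field_simps)
  have "x * ((c - 1)\<^sup>2 - (g - 1)\<^sup>2) + y * (c\<^sup>2 - g\<^sup>2) = S * (c - g)\<^sup>2"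
    unfolding x y by (simp add: power2_eq_square algebra_simps)
  also have "\<dots> = (c * S - g * S)\<^sup>2 / S"
    using S by (simp add: power2_eq_square field_simps)
  finally show ?thesis
    by (simp add: sq_loss_def cell_regret_def S_def[symmetric] g_def[symmetric] x[symmetric])
qed

lemma sq_div_convex_combination_le:
  fixes a b n1 n2 d1 d2 :: real
  assumes "0 < d1" "0 < d2" "0 \<le> a" "0 \<le> b"
  shows "(a * n1 + b * n2)\<^sup>2 / (a * d1 + b * d2) \<le> a * n1\<^sup>2 / d1 + b * n2\<^sup>2 / d2"
proof (cases "a * d1 + b * d2 = 0")
  case True
  then show ?thesis using assms by simp
next
  case False
  then have d: "0 < a * d1 + b * d2" using assms by (smt (verit) mult_nonneg_nonneg)
  \<comment> \<open>Lagrange's identity for the Cauchy--Schwarz inequality in Engel form\<close>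
  have "(a * n1\<^sup>2 * d2 + b * n2\<^sup>2 * d1) * (a * d1 + b * d2) - (a * n1 + b * n2)\<^sup>2 * (d1 * d2)
      = a * b * (n1 * d2 - n2 * d1)\<^sup>2"
    by (simp add: power2_eq_square algebra_simps)
  moreover have "0 \<le> a * b * (n1 * d2 - n2 * d1)\<^sup>2" using assms by simp
  ultimately have "(a * n1 + b * n2)\<^sup>2 * (d1 * d2) \<le> (a * n1\<^sup>2 * d2 + b * n2\<^sup>2 * d1) * (a * d1 + b * d2)"
    by linarith
  moreover have "a * n1\<^sup>2 / d1 + b * n2\<^sup>2 / d2 = (a * n1\<^sup>2 * d2 + b * n2\<^sup>2 * d1) / (d1 * d2)"
    using assms by (simp add: field_simps)
  moreover have "X / Y \<le> Z / W" if "0 < Y" "0 < W" "X * W \<le> Z * Y" for X Y Z W :: real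
    using that by (simp add: divide_le_eq le_divide_eq mult.commute)
  ultimately show ?thesis using d assms by (metis mult_pos_pos)
qed

lemma convex_on_quadratic_over_affine:
  fixes p q m n :: real
  assumes "convex I" and pos: "\<And>v. v \<in> I \<Longrightarrow> 0 < m + n * v"
  shows "convex_on I (\<lambda>v. (p + q * v)\<^sup>2 / (m + n * v))"
proof (rule convex_onI)
  fix t x y :: real assume t: "0 < t" "t < 1" and xy: "x \<in> I" "y \<in> I"
  have "(p + q * ((1 - t) *\<^sub>R x + t *\<^sub>R y))\<^sup>2 / (m + n * ((1 - t) *\<^sub>R x + t *\<^sub>R y))
      = ((1 - t) * (p + q * x) + t * (p + q * y))\<^sup>2 / ((1 - t) * (m + n * x) + t * (m + n * y))"
    by (simp add: algebra_simps)
  also have "\<dots> \<le> (1 - t) * (p + q * x)\<^sup>2 / (m + n * x) + t * (p + q * y)\<^sup>2 / (m + n * y)"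
    using pos xy t by (intro sq_div_convex_combination_le) auto
  finally show "(p + q * ((1 - t) *\<^sub>R x + t *\<^sub>R y))\<^sup>2 / (m + n * ((1 - t) *\<^sub>R x + t *\<^sub>R y))
      \<le> (1 - t) * ((p + q * x)\<^sup>2 / (m + n * x)) + t * ((p + q * y)\<^sup>2 / (m + n * y))"
    by simp
qed (rule assms(1))

lemma convex_on_cell_regret:
  fixes c A B :: real
  assumes "0 \<le> A" "0 \<le> B"
  shows "convex_on {0<..<1} (\<lambda>u. cell_regret c (u * A) ((1 - u) * B))"
proof (cases "A = 0 \<and> B = 0")
  case True
  then show ?thesis by (simp add: cell_regret_def convex_on_const)
next
  case False
  have "0 < B + (A - B) * u" if "u \<in> {0<..<1}" for u
  proof -
    have "B + (A - B) * u = u * A + (1 - u) * B" by (simp add: algebra_simps)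
    moreover have "0 < u * A + (1 - u) * B"
    proof (cases "A = 0")
      case True
      then have "0 < B" using False assms by auto
      then show ?thesis using True that by simp
    next
      case False
      then have "0 < A" using assms by auto
      then show ?thesis using that assms by (intro add_pos_nonneg) auto
    qed
    ultimately show ?thesis by simp
  qed
  then have "convex_on {0<..<1} (\<lambda>u. (c * B + (c * A - c * B - A) * u)\<^sup>2 / (B + (A - B) * u))"
    by (intro convex_on_quadratic_over_affine) auto
  moreover have "cell_regret c (u * A) ((1 - u) * B)
      = (c * B + (c * A - c * B - A) * u)\<^sup>2 / (B + (A - B) * u)" for u
    by (simp add: cell_regret_def algebra_simps)
  ultimately show ?thesis by simp
qed

definition prior_regret ::
    "(bool \<Rightarrow> bool \<Rightarrow> real) \<Rightarrow> real \<Rightarrow> real \<Rightarrow> real \<Rightarrow> real \<Rightarrow> real \<Rightarrow> real" where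
  "prior_regret c a1 b1 a2 b2 u =
     (\<Sum>s1\<in>(UNIV::bool set). \<Sum>s2\<in>(UNIV::bool set).
        cell_regret (c s1 s2) (u * (sig_prob a1 s1 * sig_prob a2 s2))
          ((1 - u) * (sig_prob b1 s1 * sig_prob b2 s2)))"

lemma sig_prob_nonneg: "p \<in> {0..1} \<Longrightarrow> 0 \<le> sig_prob p s"
  by (auto simp: sig_prob_def)

lemma convex_on_prior_regret:
  assumes "a1 \<in> {0..1}" "b1 \<in> {0..1}" "a2 \<in> {0..1}" "b2 \<in> {0..1}"
  shows "convex_on {0<..<1} (prior_regret c a1 b1 a2 b2)"
proof -
  have "convex_on {0<..<1} (\<lambda>u. cell_regret (c s1 s2) (u * (sig_prob a1 s1 * sig_prob a2 s2))
      ((1 - u) * (sig_prob b1 s1 * sig_prob b2 s2)))" for s1 s2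
    using assms by (intro convex_on_cell_regret) (simp_all add: sig_prob_nonneg)
  then show ?thesis
    unfolding prior_regret_def[abs_def] UNIV_bool by (simp add: convex_on_add)
qed

lemma expected_regret_given_signals:
  assumes "u \<in> {0<..<1}" "a1 \<in> {0..1}" "b1 \<in> {0..1}" "a2 \<in> {0..1}" "b2 \<in> {0..1}"
  shows "(\<Sum>w\<in>(UNIV::bool set). joint_prob u a1 b1 a2 b2 w s1 s2 *
           (sq_loss c w - sq_loss (fstar u a1 b1 a2 b2 s1 s2) w))
       = cell_regret c (u * (sig_prob a1 s1 * sig_prob a2 s2)) ((1 - u) * (sig_prob b1 s1 * sig_prob b2 s2))"
proof -
  define x where "x = u * (sig_prob a1 s1 * sig_prob a2 s2)"
  define y where "y = (1 - u) * (sig_prob b1 s1 * sig_prob b2 s2)"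
  have "0 \<le> x" "0 \<le> y" using assms by (simp_all add: x_def y_def sig_prob_nonneg)
  moreover have "joint_prob u a1 b1 a2 b2 True s1 s2 = x" "joint_prob u a1 b1 a2 b2 False s1 s2 = y"
    by (simp_all add: joint_prob_def state_prob_def x_def y_def)
  moreover have "fstar u a1 b1 a2 b2 s1 s2 = x / (x + y)"
    by (simp add: fstar_def x_def y_def mult.assoc)
  ultimately show ?thesis
    using cell_regret_eq_expected_loss_difference[of x y c] by (simp add: UNIV_bool x_def y_def)
qed

lemma phi_eq_prior_regret:
  assumes "in_Theta4 \<mu> a1 b1 a2 b2" "0 < lam"
  shows "phi f \<mu> a1 b1 a2 b2 lam
       = prior_regret (\<lambda>s1 s2. f (report \<mu> a1 b1 1 s1) (report \<mu> a2 b2 1 s2)) a1 b1 a2 b2 (u_prior \<mu> lam)"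
proof -
  have \<mu>: "0 < \<mu>" "\<mu> < 1" and ab: "a1 \<in> {0..1}" "b1 \<in> {0..1}" "a2 \<in> {0..1}" "b2 \<in> {0..1}"
    using assms(1) by (auto simp: in_Theta4_def)
  let ?u = "u_prior \<mu> lam"
  have "phi f \<mu> a1 b1 a2 b2 lam =
      (\<Sum>s1\<in>(UNIV::bool set). \<Sum>s2\<in>(UNIV::bool set). \<Sum>w\<in>(UNIV::bool set).
        joint_prob ?u a1 b1 a2 b2 w s1 s2 *
        (sq_loss (f (report \<mu> a1 b1 1 s1) (report \<mu> a2 b2 1 s2)) w
         - sq_loss (fstar ?u a1 b1 a2 b2 s1 s2) w))"
    unfolding phi_def Let_def report_u_prior[OF \<mu> assms(2)] by (simp add: UNIV_bool algebra_simps)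
  also have "\<dots> = prior_regret (\<lambda>s1 s2. f (report \<mu> a1 b1 1 s1) (report \<mu> a2 b2 1 s2)) a1 b1 a2 b2 ?u"
    unfolding prior_regret_def
    using expected_regret_given_signals[OF u_prior_in_open_unit_interval[OF \<mu>] ab] by simp
  finally show ?thesis .
qed

theorem mainTheorem3:
  fixes f :: "real \<Rightarrow> real \<Rightarrow> real" and \<mu> a1 b1 a2 b2 :: real
  assumes "\<forall>x\<in>{0..1}. \<forall>y\<in>{0..1}. f x y \<in> {0..1}"
    and "in_Theta4 \<mu> a1 b1 a2 b2"
  shows "single_troughed_on {0<..1} (phi f \<mu> a1 b1 a2 b2)"
proof -
  have \<mu>: "0 < \<mu>" "\<mu> < 1" and ab: "a1 \<in> {0..1}" "b1 \<in> {0..1}" "a2 \<in> {0..1}" "b2 \<in> {0..1}"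
    using assms(2) by (auto simp: in_Theta4_def)
  define R where
    "R = prior_regret (\<lambda>s1 s2. f (report \<mu> a1 b1 1 s1) (report \<mu> a2 b2 1 s2)) a1 b1 a2 b2"
  have "single_troughed_on {0<..1} (R \<circ> u_prior \<mu>)"
  proof (rule single_troughed_on_convex_comp_monotone)
    show "convex_on {0<..<1} R" unfolding R_def using ab by (rule convex_on_prior_regret)
    show "continuous_on {0<..1} (u_prior \<mu>)"
      using continuous_on_u_prior[OF \<mu>] by (rule continuous_on_subset) auto
    show "u_prior \<mu> ` {0<..1} \<subseteq> {0<..<1}" using u_prior_in_open_unit_interval[OF \<mu>] by blast
    show "mono_on {0<..1} (u_prior \<mu>) \<or> antimono_on {0<..1} (u_prior \<mu>)"
      by (rule mono_or_antimono_on_u_prior[OF \<mu>]) (simp add: subset_eq)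
  qed simp
  moreover have "single_troughed_on {0<..1} (phi f \<mu> a1 b1 a2 b2)
      = single_troughed_on {0<..1} (R \<circ> u_prior \<mu>)"
    by (rule single_troughed_on_cong) (simp add: phi_eq_prior_regret[OF assms(2)] R_def)
  ultimately show ?thesis by simp
qed

end
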